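(* Let $p$ be an odd prime, $m\in\mathbb Z_p$ with $m\not\equiv0,\pm1\pmod p$. Then $$\sum_{k=0}^{[p/4]}\binom{4k}{2k}\Big(-\frac m{4(m-1)^2}\Big)^k\equiv\frac1{m+1}\Big(\frac{m-1}p\Big)\Big\{m\Big(\frac mp\Big)+\Big(\frac{-1}p\Big)\Big\}\pmod p$$ and $$\sum_{k=0}^{[p/4]}\binom{4k}{2k}\Big(-\frac{(m-1)^2}{64m}\Big)^k\equiv\begin{cases}\frac1{m+1}\big(m+\big(\frac mp\big)\big)m^{\frac{p-1}4}\pmod p&\text{if }4\mid p-1,\\ \frac1{m+1}\big(\big(\frac mp\big)+1\big)m^{\frac{p+1}4}\pmod p&\text{if }4\mid p-3.\end{cases}$$
   Context: $[x]$ is the greatest integer $\le x$; $\mathbb Z_p$ is the set of rational numbers whose denominator is not divisible by $p$; $(\frac{\cdot}{p})$ is the Legendre symbol. *)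

theory Defs
  imports Complex_Main "HOL-Number_Theory.Number_Theory"
begin

definition in_Zp :: "nat \<Rightarrow> rat \<Rightarrow> bool" where
  "in_Zp p x \<longleftrightarrow> \<not> (int p dvd snd (quotient_of x))"

definition ratcong_mod :: "nat \<Rightarrow> rat \<Rightarrow> rat \<Rightarrow> bool" where
  "ratcong_mod p x y \<longleftrightarrow> in_Zp p ((x - y) / of_nat p)"

text \<open>Legendre symbol of a rational a/b with p not dividing b:
  (a/p)(b/p) = (ab/p).\<close>
definition rLegendre :: "rat \<Rightarrow> nat \<Rightarrow> int" where
  "rLegendre x p = Legendre (fst (quotient_of x) * snd (quotient_of x)) (int p)"

end

theory Submission
  imports Defs
begin

text \<open>
  The congruence \<open>binomial (2k) k \<equiv> binomial ((p-1)/2) k (-4)^k\<close> turns both sums into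
  \<open>\<Sum>\<^sub>k binomial n (2k) y^k\<close> with \<open>n = (p-1)/2\<close>, the rational part of \<open>(1 + t\<surd>d)^n\<close> for
  \<open>t\<^sup>2 d = 16 y\<close>.  With \<open>d = -m\<close> the number \<open>1 + t\<surd>d\<close> is a rational multiple of
  \<open>(1 - \<surd>d)\<^sup>2\<close> for the first sum, and for the second sum a multiple of \<open>\<surd>d\<close> times the
  conjugate of that.  So everything is governed by \<open>(1 - \<surd>d)^(p-1)\<close>, which the Frobenius
  congruence \<open>(a + b\<surd>d)^p \<equiv> a + b d^((p-1)/2) \<surd>d\<close> determines modulo \<open>p\<close>; Euler's
  criterion then turns the powers \<open>m^((p-1)/2)\<close> into Legendre symbols.
\<close>

section \<open>Arithmetic in \<open>\<rat>(\<surd>d)\<close>\<close>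

text \<open>A pair \<open>(a, b)\<close> stands for \<open>a + b\<surd>d\<close>; nothing requires \<open>d\<close> to be a non-square.\<close>

definition qmult :: "rat \<Rightarrow> rat \<times> rat \<Rightarrow> rat \<times> rat \<Rightarrow> rat \<times> rat" where
  "qmult d z w = (fst z * fst w + d * snd z * snd w, fst z * snd w + snd z * fst w)"

fun qpow :: "rat \<Rightarrow> rat \<times> rat \<Rightarrow> nat \<Rightarrow> rat \<times> rat" where
  "qpow d z 0 = (1, 0)"
| "qpow d z (Suc N) = qmult d (qpow d z N) z"

lemma qmult_commute: "qmult d z w = qmult d w z"
  unfolding qmult_def by (simp add: algebra_simps)

lemma qmult_assoc: "qmult d (qmult d z w) u = qmult d z (qmult d w u)"
  unfolding qmult_def by (simp add: algebra_simps)

lemma qmult_one [simp]: "qmult d z (1, 0) = z" "qmult d (1, 0) z = z"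
  unfolding qmult_def by auto

lemma qpow_add: "qpow d z (M + N) = qmult d (qpow d z M) (qpow d z N)"
  by (induction N) (auto simp: qmult_assoc)

lemma qpow_qmult: "qpow d (qmult d z w) N = qmult d (qpow d z N) (qpow d w N)"
proof (induction N)
  case (Suc N)
  then show ?case by (simp add: qmult_assoc) (metis qmult_assoc qmult_commute)
qed simp

lemma qpow_mult: "qpow d z (M * N) = qpow d (qpow d z M) N"
  by (induction N) (simp_all add: qpow_add qmult_commute)

lemma qpow_scale: "qpow d (c * a, c * b) N = (c ^ N * fst (qpow d (a, b) N), c ^ N * snd (qpow d (a, b) N))"
  by (induction N) (auto simp: qmult_def algebra_simps)

lemma qpow_conj: "qpow d (a, - b) N = (fst (qpow d (a, b) N), - snd (qpow d (a, b) N))"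
  by (induction N) (auto simp: qmult_def algebra_simps)

lemma qpow_rat: "qpow d (a, 0) N = (a ^ N, 0)"
  by (induction N) (auto simp: qmult_def)

lemma qpow_pure:
  "qpow d (0, t) i = (if even i then t ^ i * d ^ (i div 2) else 0, if odd i then t ^ i * d ^ (i div 2) else 0)"
  by (induction i) (auto elim!: oddE simp: qmult_def algebra_simps)

lemma sum_choose_Suc:
  fixes f :: "nat \<Rightarrow> 'a :: comm_semiring_1"
  shows "(\<Sum>i\<le>Suc N. of_nat (Suc N choose i) * f i)
    = (\<Sum>i\<le>N. of_nat (N choose i) * f i) + (\<Sum>i\<le>N. of_nat (N choose i) * f (Suc i))"
proof -
  have shift: "(\<Sum>i\<le>Suc N. g i) = g 0 + (\<Sum>i\<le>N. g (Suc i))" for g :: "nat \<Rightarrow> 'a"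
    by (rule sum.atMost_Suc_shift)
  have "(\<Sum>i\<le>N. of_nat (N choose i) * f i) = (\<Sum>i\<le>Suc N. of_nat (N choose i) * f i)"
    by (simp add: binomial_eq_0)
  then show ?thesis unfolding shift by (simp add: sum.distrib algebra_simps)
qed

lemma Suc_times_central_binomial:
  "Suc j * (2 * Suc j choose Suc j) = 2 * (2 * j + 1) * (2 * j choose j)"
  by (metis Suc_eq_plus1 Suc_times_binomial Suc_times_binomial_add add_Suc_right add_Suc_shift
      mult.assoc mult_2)

lemma Suc_times_binomial_Suc: "Suc k * (n choose Suc k) = (n - k) * (n choose k)"
  by (metis binomial_absorption binomial_absorb_comp)

lemma sum_even_reindex:
  fixes h :: "nat \<Rightarrow> 'a :: comm_monoid_add"
  shows "(\<Sum>i\<le>N. if even i then h (i div 2) else 0) = (\<Sum>k\<le>N div 2. h k)"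
proof (induction N)
  case (Suc N)
  then show ?case
    by (cases "even N") (simp_all add: odd_Suc_div_two flip: even_Suc_div_two)
qed simp

lemma qpow_one_plus:
  "qpow d (1, t) N = ((\<Sum>i\<le>N. of_nat (N choose i) * fst (qpow d (0, t) i)),
                      (\<Sum>i\<le>N. of_nat (N choose i) * snd (qpow d (0, t) i)))"
proof (induction N)
  case (Suc N)
  have "fst (qpow d (0, t) (Suc i)) = d * t * snd (qpow d (0, t) i)"
    and "snd (qpow d (0, t) (Suc i)) = t * fst (qpow d (0, t) i)" for i
    by (simp_all add: qmult_def)
  then show ?case
    by (simp only: qpow.simps Suc sum_choose_Suc) (simp add: qmult_def sum_distrib_left algebra_simps)
qed simp

lemma fst_qpow_one_plus:
  "fst (qpow d (1, t) N) = (\<Sum>k\<le>N div 2. of_nat (N choose (2 * k)) * (t\<^sup>2 * d) ^ k)"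
proof -
  have "fst (qpow d (1, t) N)
      = (\<Sum>i\<le>N. if even i then of_nat (N choose (2 * (i div 2))) * (t\<^sup>2 * d) ^ (i div 2) else 0)"
    unfolding qpow_one_plus qpow_pure fst_conv
    by (intro sum.cong refl) (auto simp: power_mult_distrib power_mult[symmetric] elim!: evenE)
  also have "\<dots> = (\<Sum>k\<le>N div 2. of_nat (N choose (2 * k)) * (t\<^sup>2 * d) ^ k)"
    by (rule sum_even_reindex)
  finally show ?thesis .
qed

lemma qpow_one_minus_sqrt_square:
  assumes "1 + d \<noteq> 0"
  shows "qpow d (1, - 2 / (1 + d)) N
       = ((1 / (1 + d)) ^ N * fst (qpow d (1, -1) (2 * N)), (1 / (1 + d)) ^ N * snd (qpow d (1, -1) (2 * N)))"
proof -
  have "(1 + d) * (- 2 / (1 + d)) = -2" using assms by (simp add: field_simps)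
  then have "qpow d (1, -1) 2 = ((1 + d) * 1, (1 + d) * (- 2 / (1 + d)))"
    by (simp add: numeral_2_eq_2 qmult_def)
  then have "qpow d (1, -1) (2 * N) = qpow d ((1 + d) * 1, (1 + d) * (- 2 / (1 + d))) N"
    by (simp add: qpow_mult)
  with assms show ?thesis unfolding qpow_scale by (simp add: field_simps)
qed

lemma qpow_one_split:
  assumes "d * u * s = 1"
  shows "qpow d (1, u) N = qmult d (qpow d (0, u) N) (qpow d (1, s) N)"
proof -
  have "(1, u) = qmult d (0, u) (1, s)" using assms by (simp add: qmult_def)
  then show ?thesis by (simp add: qpow_qmult)
qed

section \<open>\<open>p\<close>-integral rationals\<close>

lemma in_Zp_iff_fraction:
  "in_Zp p x \<longleftrightarrow> (\<exists>a b. \<not> int p dvd b \<and> x = of_int a / of_int b)"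
proof
  assume "in_Zp p x"
  then show "\<exists>a b. \<not> int p dvd b \<and> x = of_int a / of_int b"
    unfolding in_Zp_def by (metis prod.collapse quotient_of_div)
next
  assume "\<exists>a b. \<not> int p dvd b \<and> x = of_int a / of_int b"
  then obtain a b where b: "\<not> int p dvd b" and x: "x = of_int a / of_int b" by blast
  obtain a' b' where q: "quotient_of x = (a', b')" by (cases "quotient_of x")
  have "b \<noteq> 0" "b' > 0" using b quotient_of_denom_pos[OF q] by auto
  moreover have "x = of_int a' / of_int b'" using quotient_of_div[OF q] .
  ultimately have "a * b' = a' * b" using x by (simp add: field_simps flip: of_int_mult)
  then have "b' dvd a' * b" by (metis dvd_triv_right)
  with quotient_of_coprime[OF q] have "b' dvd b"
    by (metis coprime_commute coprime_dvd_mult_right_iff)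
  with b show "in_Zp p x" unfolding in_Zp_def q by (auto dest: dvd_trans)
qed

locale prime_modulus =
  fixes p :: nat
  assumes prime: "prime p"
begin

lemma p_pos: "p > 0"
  using prime prime_gt_0_nat by blast

lemma prime_not_dvd_mult: "\<not> int p dvd a \<Longrightarrow> \<not> int p dvd b \<Longrightarrow> \<not> int p dvd a * b"
  using prime by (simp add: prime_dvd_mult_iff)

lemma ratcong_mod_zero_fraction:
  assumes "int p dvd a" "\<not> int p dvd b"
  shows "ratcong_mod p (of_int a / of_int b) 0"
proof -
  obtain c where "a = int p * c" using assms(1) by blast
  with assms(2) p_pos have "(of_int a / of_int b - 0) / of_nat p = (of_int c / of_int b :: rat)" by auto
  with assms(2) show ?thesis unfolding ratcong_mod_def in_Zp_iff_fraction by blast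
qed

lemma in_Zp_of_int [simp]: "in_Zp p (of_int a)"
  unfolding in_Zp_iff_fraction using prime by (intro exI[of _ a] exI[of _ 1]) auto

lemma in_Zp_of_nat [simp]: "in_Zp p (of_nat n)"
  using in_Zp_of_int[of "int n"] by simp

lemma in_Zp_numeral [simp]: "in_Zp p (numeral k)" and in_Zp_0 [simp]: "in_Zp p 0"
  and in_Zp_1 [simp]: "in_Zp p 1"
  using in_Zp_of_nat[of "numeral k"] in_Zp_of_nat[of 0] in_Zp_of_nat[of 1] by simp_all

lemma in_Zp_add [simp]:
  assumes "in_Zp p x" "in_Zp p y" shows "in_Zp p (x + y)"
proof -
  obtain a b c e where "\<not> int p dvd b" "x = of_int a / of_int b" "\<not> int p dvd e" "y = of_int c / of_int e"
    using assms unfolding in_Zp_iff_fraction by blast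
  moreover from this have "x + y = of_int (a * e + c * b) / of_int (b * e)"
    by (cases "b = 0 \<or> e = 0") (auto simp: field_simps)
  ultimately show ?thesis unfolding in_Zp_iff_fraction using prime_not_dvd_mult by blast
qed

lemma in_Zp_mult [simp]:
  assumes "in_Zp p x" "in_Zp p y" shows "in_Zp p (x * y)"
proof -
  obtain a b c e where "\<not> int p dvd b" "x = of_int a / of_int b" "\<not> int p dvd e" "y = of_int c / of_int e"
    using assms unfolding in_Zp_iff_fraction by blast
  moreover from this have "x * y = of_int (a * c) / of_int (b * e)" by simp
  ultimately show ?thesis unfolding in_Zp_iff_fraction using prime_not_dvd_mult by blast
qed

lemma in_Zp_uminus [simp]: "in_Zp p x \<Longrightarrow> in_Zp p (- x)"
  using in_Zp_mult[of "-1" x] in_Zp_of_int[of "-1"] by simp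

lemma in_Zp_diff [simp]: "in_Zp p x \<Longrightarrow> in_Zp p y \<Longrightarrow> in_Zp p (x - y)"
  using in_Zp_add[of x "- y"] by simp

lemma in_Zp_power [simp]: "in_Zp p x \<Longrightarrow> in_Zp p (x ^ k)"
  by (induction k) auto

lemma ratcong_mod_refl [simp]: "ratcong_mod p x x"
  unfolding ratcong_mod_def by simp

lemma ratcong_mod_sym: "ratcong_mod p x y \<Longrightarrow> ratcong_mod p y x"
  unfolding ratcong_mod_def using in_Zp_uminus[of "(x - y) / of_nat p"] by (simp add: minus_divide_left)

lemma ratcong_mod_trans [trans]: "ratcong_mod p x y \<Longrightarrow> ratcong_mod p y z \<Longrightarrow> ratcong_mod p x z"
  unfolding ratcong_mod_def using in_Zp_add[of "(x - y) / of_nat p" "(y - z) / of_nat p"]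
  by (simp add: add_divide_distrib[symmetric])

lemma ratcong_mod_add:
  "ratcong_mod p x x' \<Longrightarrow> ratcong_mod p y y' \<Longrightarrow> ratcong_mod p (x + y) (x' + y')"
  unfolding ratcong_mod_def using in_Zp_add[of "(x - x') / of_nat p" "(y - y') / of_nat p"]
  by (simp add: add_divide_distrib[symmetric] algebra_simps)

lemma ratcong_mod_uminus: "ratcong_mod p x x' \<Longrightarrow> ratcong_mod p (- x) (- x')"
  unfolding ratcong_mod_def using in_Zp_uminus[of "(x - x') / of_nat p"] by (simp add: minus_divide_left)

lemma in_Zp_ratcong_mod: "ratcong_mod p x y \<Longrightarrow> in_Zp p y \<Longrightarrow> in_Zp p x"
  unfolding ratcong_mod_def using p_pos
  by (metis in_Zp_add in_Zp_mult in_Zp_of_nat nonzero_mult_div_cancel_left of_nat_0_eq_iff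
      not_gr0 times_divide_eq_right diff_add_cancel)

lemma ratcong_mod_mult:
  assumes "ratcong_mod p x x'" "ratcong_mod p y y'" "in_Zp p x'" "in_Zp p y'"
  shows "ratcong_mod p (x * y) (x' * y')"
proof -
  have "in_Zp p x" using in_Zp_ratcong_mod assms by blast
  moreover have "(x * y - x' * y') / of_nat p = x * ((y - y') / of_nat p) + ((x - x') / of_nat p) * y'"
    using p_pos by (simp add: field_simps)
  ultimately show ?thesis using assms unfolding ratcong_mod_def
    by (simp only:) (intro in_Zp_add in_Zp_mult; simp)
qed

lemma ratcong_mod_mult_left:
  "ratcong_mod p y y' \<Longrightarrow> in_Zp p x \<Longrightarrow> in_Zp p y' \<Longrightarrow> ratcong_mod p (x * y) (x * y')"
  using ratcong_mod_mult[of x x y y'] by simp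

lemma ratcong_mod_sum:
  "(\<And>i. i \<in> A \<Longrightarrow> ratcong_mod p (f i) (g i)) \<Longrightarrow> ratcong_mod p (sum f A) (sum g A)"
  by (induction A rule: infinite_finite_induct) (auto intro: ratcong_mod_add)

lemma ratcong_mod_of_int: "[a = b] (mod int p) \<Longrightarrow> ratcong_mod p (of_int a) (of_int b)"
  using ratcong_mod_zero_fraction[of "a - b" 1] prime_gt_1_nat[OF prime]
  by (simp add: cong_iff_dvd_diff ratcong_mod_def)

lemma ratcong_mod_zero_fraction_iff:
  assumes "\<not> int p dvd b"
  shows "ratcong_mod p (of_int a / of_int b) 0 \<longleftrightarrow> int p dvd a"
proof
  assume "ratcong_mod p (of_int a / of_int b) 0"
  then obtain c e where e: "\<not> int p dvd e" and ce: "of_int a / of_int b / of_nat p = (of_int c / of_int e :: rat)"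
    unfolding ratcong_mod_def in_Zp_iff_fraction by auto
  have "b \<noteq> 0" "e \<noteq> 0" using assms e by auto
  with ce p_pos have "of_int (a * e) = (of_int (int p * (b * c)) :: rat)" by (simp add: field_simps)
  then have "a * e = int p * (b * c)" by (simp only: of_int_eq_iff)
  with e show "int p dvd a"
    by (metis dvd_triv_left prime_not_dvd_mult prime prime_dvd_mult_iff prime_nat_int_transfer)
qed (use assms ratcong_mod_zero_fraction in blast)

definition Zp_unit :: "rat \<Rightarrow> bool" where
  "Zp_unit x \<longleftrightarrow> in_Zp p x \<and> \<not> ratcong_mod p x 0"

lemma in_Zp_if_Zp_unit: "Zp_unit x \<Longrightarrow> in_Zp p x"
  unfolding Zp_unit_def by simp

lemma Zp_unit_fraction:
  assumes "Zp_unit x"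
  obtains a b where "quotient_of x = (a, b)" "x = of_int a / of_int b" "\<not> int p dvd a" "\<not> int p dvd b"
proof -
  obtain a b where q: "quotient_of x = (a, b)" by (cases "quotient_of x")
  moreover have "\<not> int p dvd b" using assms q unfolding Zp_unit_def in_Zp_def by simp
  moreover have x: "x = of_int a / of_int b" using quotient_of_div[OF q] .
  ultimately show ?thesis
    using that assms ratcong_mod_zero_fraction_iff unfolding Zp_unit_def by blast
qed

lemma Zp_unit_of_int [simp]: "Zp_unit (of_int a) \<longleftrightarrow> \<not> int p dvd a"
  using ratcong_mod_zero_fraction_iff[of 1 a] prime_gt_1_nat[OF prime] unfolding Zp_unit_def by simp

lemma Zp_unit_1 [simp]: "Zp_unit 1"
  using Zp_unit_of_int[of 1] prime_gt_1_nat[OF prime] by simp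

lemma Zp_unit_mult [simp]: "Zp_unit x \<Longrightarrow> Zp_unit y \<Longrightarrow> Zp_unit (x * y)"
proof -
  assume "Zp_unit x" "Zp_unit y"
  then obtain a b c e where "x = of_int a / of_int b" "y = of_int c / of_int e"
    and "\<not> int p dvd a" "\<not> int p dvd b" "\<not> int p dvd c" "\<not> int p dvd e"
    by (metis Zp_unit_fraction)
  moreover from this have "x * y = of_int (a * c) / of_int (b * e)" by simp
  ultimately show "Zp_unit (x * y)"
    unfolding Zp_unit_def in_Zp_iff_fraction using ratcong_mod_zero_fraction_iff prime_not_dvd_mult
    by metis
qed

lemma Zp_unit_power [simp]: "Zp_unit x \<Longrightarrow> Zp_unit (x ^ k)"
  by (induction k) auto

lemma Zp_unit_uminus [simp]: "Zp_unit (- x) \<longleftrightarrow> Zp_unit x"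
  unfolding Zp_unit_def using ratcong_mod_uminus[of x 0] ratcong_mod_uminus[of "- x" 0]
  by (auto dest: in_Zp_uminus)

lemma Zp_unit_inverse: "Zp_unit x \<Longrightarrow> Zp_unit (1 / x)"
proof -
  assume "Zp_unit x"
  then obtain a b where "x = of_int a / of_int b" "\<not> int p dvd a" "\<not> int p dvd b"
    by (metis Zp_unit_fraction)
  moreover from this have "1 / x = of_int b / of_int a" by simp
  ultimately show "Zp_unit (1 / x)"
    unfolding Zp_unit_def in_Zp_iff_fraction using ratcong_mod_zero_fraction_iff[of a b] by metis
qed

lemma in_Zp_divide [simp]:
  assumes "in_Zp p x" "Zp_unit y" shows "in_Zp p (x / y)"
proof -
  have "in_Zp p (1 / y)" using Zp_unit_inverse[OF assms(2)] unfolding Zp_unit_def ..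
  with assms(1) have "in_Zp p (x * (1 / y))" by (rule in_Zp_mult)
  then show ?thesis by (simp only: times_divide_eq_right mult_1_right)
qed

lemma ratcong_mod_mult_cancel:
  assumes "ratcong_mod p (x * c) (y * c)" "in_Zp p y" "Zp_unit c"
  shows "ratcong_mod p x y"
proof -
  have "c \<noteq> 0" using assms(3) unfolding Zp_unit_def by auto
  have "ratcong_mod p (1 / c * (x * c)) (1 / c * (y * c))"
    using assms(1) by (rule ratcong_mod_mult_left)
      (use assms Zp_unit_inverse[OF assms(3)] in \<open>auto simp: Zp_unit_def\<close>)
  with \<open>c \<noteq> 0\<close> show ?thesis by simp
qed

lemma ratcong_mod_cancel_common:
  assumes "ratcong_mod p (x * c) e" "ratcong_mod p (y * c) e" "in_Zp p y" "Zp_unit c"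
  shows "ratcong_mod p x y"
  using ratcong_mod_trans[OF assms(1) ratcong_mod_sym[OF assms(2)]] assms(3,4)
  by (rule ratcong_mod_mult_cancel)

lemma in_Zp_qpow:
  assumes "in_Zp p a" "in_Zp p b" "in_Zp p d"
  shows "in_Zp p (fst (qpow d (a, b) N))" "in_Zp p (snd (qpow d (a, b) N))"
  by (induction N) (use assms in \<open>auto simp: qmult_def\<close>)

lemma ratcong_mod_sum_choose_prime:
  assumes "\<And>i. in_Zp p (g i)"
  shows "ratcong_mod p (\<Sum>i\<le>p. of_nat (p choose i) * g i) (g 0 + g p)"
proof -
  have "ratcong_mod p (\<Sum>i\<le>p. of_nat (p choose i) * g i) (\<Sum>i\<le>p. if i \<in> {0, p} then g i else 0)"
  proof (rule ratcong_mod_sum)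
    fix i assume "i \<in> {..p}"
    show "ratcong_mod p (of_nat (p choose i) * g i) (if i \<in> {0, p} then g i else 0)"
    proof (cases "i \<in> {0, p}")
      case False
      with \<open>i \<in> {..p}\<close> have "p dvd (p choose i)" using dvd_choose_prime prime by auto
      then obtain k where "p choose i = p * k" by blast
      then have "(of_nat (p choose i) * g i - 0) / of_nat p = of_nat k * g i" using p_pos by simp
      with False assms show ?thesis unfolding ratcong_mod_def by simp
    qed auto
  qed
  also have "(\<Sum>i\<le>p. if i \<in> {0, p} then g i else 0) = g 0 + g p"
  proof -
    have "{..p} \<inter> {i. i \<in> {0, p}} = {0, p}" by auto
    with p_pos show ?thesis by (simp add: sum.If_cases)
  qed
  finally show ?thesis .
qed

end

section \<open>Odd primes: Euler, Fermat and Frobenius\<close>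

locale odd_prime_modulus = prime_modulus +
  assumes odd: "odd p"
begin

lemma p_gt_2: "p > 2"
  using prime_ge_2_nat[OF prime] odd by (cases "p = 2") auto

lemma Zp_unit_2 [simp]: "Zp_unit 2"
proof -
  have "\<not> p dvd 2"
  proof
    assume "p dvd 2"
    then have "p \<le> 2" by (rule dvd_imp_le) simp
    with p_gt_2 show False by simp
  qed
  then have "\<not> int p dvd int 2" by (metis int_dvd_int_iff)
  then show ?thesis using Zp_unit_of_int[of "int 2"] by simp
qed

lemma Zp_unit_4 [simp]: "Zp_unit 4"
  using Zp_unit_power[OF Zp_unit_2, of 2] by simp

text \<open>For \<open>x = a/b\<close> the symbol \<open>rLegendre x p\<close> is that of \<open>ab = x b\<^sup>2\<close>, and Euler's
  criterion gives \<open>(b\<^sup>2)^((p-1)/2) \<equiv> 1\<close>.\<close>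

lemma ratcong_mod_rLegendre:
  assumes "Zp_unit x"
  shows "ratcong_mod p (of_int (rLegendre x p)) (x ^ ((p - 1) div 2))"
proof -
  define n where "n = (p - 1) div 2"
  obtain a b where q: "quotient_of x = (a, b)" "x = of_int a / of_int b" and b: "\<not> int p dvd b"
    using Zp_unit_fraction[OF assms] by blast
  have euler: "ratcong_mod p (of_int (Legendre c (int p))) (of_int (c ^ n))" for c
    using ratcong_mod_of_int[OF euler_criterion[OF prime p_gt_2, of c]] unfolding n_def .
  have "QuadRes (int p) (b ^ 2)" unfolding QuadRes_def by (blast intro: cong_refl)
  moreover have "\<not> [b ^ 2 = 0] (mod int p)"
    using b prime by (simp add: cong_0_iff prime_dvd_power_iff)
  ultimately have "Legendre (b ^ 2) (int p) = 1" unfolding Legendre_def by simp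
  with euler[of "b ^ 2"] have "ratcong_mod p 1 (of_int ((b ^ 2) ^ n))" by simp
  then have "ratcong_mod p (x ^ n * 1) (x ^ n * of_int ((b ^ 2) ^ n))"
    using assms by (intro ratcong_mod_mult_left) (auto simp: Zp_unit_def)
  also have "x ^ n * of_int ((b ^ 2) ^ n) = (x * of_int b * of_int b) ^ n"
    by (simp add: power_mult_distrib power2_eq_square)
  also have "x * of_int b = of_int a"
    using q(2) b by (cases "b = 0") simp_all
  also have "(of_int a * of_int b) ^ n = (of_int ((a * b) ^ n) :: rat)"
    by simp
  also have "ratcong_mod p \<dots> (of_int (rLegendre x p))"
    using ratcong_mod_sym[OF euler[of "a * b"]] unfolding rLegendre_def q(1) by simp
  finally show ?thesis using ratcong_mod_sym n_def by simp
qed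

lemma rLegendre_square:
  assumes "Zp_unit x" shows "rLegendre x p * rLegendre x p = 1"
proof -
  obtain a b where q: "quotient_of x = (a, b)" "\<not> int p dvd a" "\<not> int p dvd b"
    using Zp_unit_fraction[OF assms] by blast
  then have "\<not> [a * b = 0] (mod int p)" by (simp add: cong_0_iff prime_not_dvd_mult)
  then show ?thesis unfolding rLegendre_def Legendre_def q(1) fst_conv snd_conv
    by (cases "QuadRes (int p) (a * b)") simp_all
qed

lemma ratcong_mod_fermat:
  assumes "Zp_unit x" shows "ratcong_mod p (x ^ (p - 1)) 1"
proof -
  define n where "n = (p - 1) div 2"
  have "p - 1 = n + n" using odd unfolding n_def by presburger
  then have "x ^ (p - 1) = x ^ n * x ^ n" by (simp only: power_add)
  also have "ratcong_mod p \<dots> (of_int (rLegendre x p) * of_int (rLegendre x p))"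
    using ratcong_mod_sym[OF ratcong_mod_rLegendre[OF assms]] unfolding n_def
    by (intro ratcong_mod_mult) simp_all
  also have "\<dots> = 1" using rLegendre_square[OF assms] by (metis of_int_1 of_int_mult)
  finally show ?thesis .
qed

lemma ratcong_mod_fermat_halves:
  assumes "Zp_unit x" shows "ratcong_mod p (x ^ ((p - 1) div 2) * x ^ ((p - 1) div 2)) 1"
proof -
  have "p - 1 = (p - 1) div 2 + (p - 1) div 2" using odd by presburger
  then show ?thesis using ratcong_mod_fermat[OF assms] by (simp flip: power_add)
qed

lemma qpow_frobenius:
  assumes "in_Zp p t" "in_Zp p d"
  shows "ratcong_mod p (fst (qpow d (1, t) p)) 1"
    and "ratcong_mod p (snd (qpow d (1, t) p)) (t ^ p * d ^ ((p - 1) div 2))"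
proof -
  have "ratcong_mod p (fst (qpow d (1, t) p)) (fst (qpow d (0, t) 0) + fst (qpow d (0, t) p))"
    unfolding qpow_one_plus fst_conv by (rule ratcong_mod_sum_choose_prime) (simp add: in_Zp_qpow assms)
  then show "ratcong_mod p (fst (qpow d (1, t) p)) 1"
    using odd by (simp add: qpow_pure)
  have "ratcong_mod p (snd (qpow d (1, t) p)) (snd (qpow d (0, t) 0) + snd (qpow d (0, t) p))"
    unfolding qpow_one_plus snd_conv by (rule ratcong_mod_sum_choose_prime) (simp add: in_Zp_qpow assms)
  moreover have "p div 2 = (p - 1) div 2" using odd by (auto elim: oddE)
  ultimately show "ratcong_mod p (snd (qpow d (1, t) p)) (t ^ p * d ^ ((p - 1) div 2))"
    using odd by (simp add: qpow_pure)
qed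

lemma central_binomial_cong:
  assumes "j \<le> (p - 1) div 2"
  shows "[int (2 * j choose j) = int ((p - 1) div 2 choose j) * (-4) ^ j] (mod int p)"
  using assms
proof (induction j)
  case (Suc j)
  define n where "n = (p - 1) div 2"
  have "p = 2 * n + 1" using odd unfolding n_def by presburger
  then have p: "int p = 2 * int n + 1" by simp
  have j: "j < n" using Suc.prems unfolding n_def by simp
  from Suc_times_central_binomial[of j]
  have "int (Suc j) * int (2 * Suc j choose Suc j) = 2 * (2 * int j + 1) * int (2 * j choose j)"
    by (metis (mono_tags) of_nat_1 of_nat_add of_nat_mult of_nat_numeral)
  also have "[\<dots> = (-4) * (int n - int j) * (int (n choose j) * (-4) ^ j)] (mod int p)"
  proof (rule cong_mult)
    have "2 * (2 * int j + 1) - (-4) * (int n - int j) = int p * 2" using p by simp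
    then show "[2 * (2 * int j + 1) = (-4) * (int n - int j)] (mod int p)"
      by (metis cong_iff_dvd_diff dvd_triv_left)
    show "[int (2 * j choose j) = int (n choose j) * (-4) ^ j] (mod int p)"
      using Suc j unfolding n_def by simp
  qed
  also have "(-4) * (int n - int j) * (int (n choose j) * (-4) ^ j)
           = int (Suc j) * (int (n choose Suc j) * (-4) ^ Suc j)"
  proof -
    have "int (Suc j * (n choose Suc j)) = int ((n - j) * (n choose j))"
      by (simp only: Suc_times_binomial_Suc)
    then have h: "int (Suc j) * int (n choose Suc j) = (int n - int j) * int (n choose j)"
      using j by (simp only: of_nat_mult of_nat_diff[OF less_imp_le[OF j]])
    have "int (Suc j) * (int (n choose Suc j) * (-4) ^ Suc j)
        = (int (Suc j) * int (n choose Suc j)) * (-4) ^ Suc j"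
      by (rule mult.assoc[symmetric])
    also have "\<dots> = (-4) * (int n - int j) * (int (n choose j) * (-4) ^ j)"
      unfolding h by (simp add: algebra_simps)
    finally show ?thesis ..
  qed
  finally have "[int (Suc j) * int (2 * Suc j choose Suc j)
               = int (Suc j) * (int (n choose Suc j) * (-4) ^ Suc j)] (mod int p)" .
  moreover have "coprime (int (Suc j)) (int p)"
  proof -
    have "\<not> p dvd Suc j" using j p by (auto dest: dvd_imp_le)
    then have "coprime p (Suc j)" using prime prime_imp_coprime by blast
    then show ?thesis by (simp add: coprime_commute flip: coprime_int_iff)
  qed
  ultimately show ?case using cong_mult_lcancel n_def by blast
qed simp

lemma sum_central_binomial_ratcong_qpow:
  assumes "in_Zp p x" "t\<^sup>2 * d = 16 * x"
  shows "ratcong_mod p (\<Sum>k = 0..p div 4. of_nat (4 * k choose (2 * k)) * x ^ k)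
                       (fst (qpow d (1, t) ((p - 1) div 2)))"
proof -
  define n where "n = (p - 1) div 2"
  obtain q where "p = 2 * q + 1" using odd by (auto elim: oddE)
  then have "n div 2 = p div 4" unfolding n_def by (simp add: div_mult2_eq[symmetric])
  have "ratcong_mod p (of_nat (4 * k choose (2 * k)) * x ^ k) (of_nat (n choose (2 * k)) * (16 * x) ^ k)"
    if "k \<le> n div 2" for k
  proof -
    have "[int (4 * k choose (2 * k)) = int (n choose (2 * k)) * 16 ^ k] (mod int p)"
      using that central_binomial_cong[of "2 * k"] unfolding n_def by (simp add: power_mult)
    then have "ratcong_mod p (of_int (int (4 * k choose (2 * k)))) (of_int (int (n choose (2 * k)) * 16 ^ k))"
      by (rule ratcong_mod_of_int)
    then have "ratcong_mod p (of_nat (4 * k choose (2 * k))) (of_nat (n choose (2 * k)) * 16 ^ k)"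
      by simp
    from ratcong_mod_mult[OF this ratcong_mod_refl[of "x ^ k"]] show ?thesis
      using assms(1) by (simp add: power_mult_distrib mult.assoc)
  qed
  then have "ratcong_mod p (\<Sum>k = 0..p div 4. of_nat (4 * k choose (2 * k)) * x ^ k)
                         (\<Sum>k\<le>n div 2. of_nat (n choose (2 * k)) * (16 * x) ^ k)"
    unfolding \<open>n div 2 = p div 4\<close> atLeast0AtMost by (intro ratcong_mod_sum) simp
  then show ?thesis unfolding fst_qpow_one_plus assms(2) n_def .
qed

lemma qpow_one_minus_sqrt_pred:
  assumes "in_Zp p d" "qpow d (1, -1) (p - 1) = (A, B)"
  shows "ratcong_mod p (A * (1 - d)) (1 - d * d ^ ((p - 1) div 2))"
    and "ratcong_mod p (B * (1 - d)) (1 - d ^ ((p - 1) div 2))"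
proof -
  have "qpow d (1, -1) p = qmult d (A, B) (1, -1)"
    using assms(2) p_pos by (metis Suc_diff_1 qpow.simps(2))
  then have "qpow d (1, -1) p = (A - d * B, B - A)" by (simp add: qmult_def)
  then have F1: "ratcong_mod p (A - d * B) 1" and F2: "ratcong_mod p (B - A) (- (d ^ ((p - 1) div 2)))"
    using qpow_frobenius[of "-1" d] assms(1) odd by simp_all
  have "ratcong_mod p ((A - d * B) + d * (B - A)) (1 + d * (- (d ^ ((p - 1) div 2))))"
    using F1 F2 assms(1) by (intro ratcong_mod_add ratcong_mod_mult_left) simp_all
  then show "ratcong_mod p (A * (1 - d)) (1 - d * d ^ ((p - 1) div 2))"
    by (simp add: algebra_simps)
  have "ratcong_mod p ((A - d * B) + (B - A)) (1 + (- (d ^ ((p - 1) div 2))))"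
    using F1 F2 by (rule ratcong_mod_add)
  then show "ratcong_mod p (B * (1 - d)) (1 - d ^ ((p - 1) div 2))"
    by (simp add: algebra_simps)
qed

text \<open>The rational part of \<open>(1 + i)^p \<equiv> 1 + i^p\<close>, evaluated with \<open>(1 + i)^4 = -4\<close>.\<close>

lemma neg_four_power_ratcong_1:
  assumes "4 dvd p - 1" shows "ratcong_mod p ((-4) ^ ((p - 1) div 4)) 1"
proof -
  define q where "q = (p - 1) div 4"
  have p: "p = 4 * q + 1" using assms p_pos unfolding q_def by auto
  have "qpow (-1) (1, 1) p = qmult (-1) (qpow (-1) (qpow (-1) (1, 1) 4) q) (1, 1)"
    unfolding p by (simp add: qpow_mult)
  also have "qpow (-1) (1, 1) 4 = (-4, 0)" by (simp add: numeral_eq_Suc qmult_def)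
  finally have "fst (qpow (-1) (1, 1) p) = (-4) ^ q" by (simp add: qpow_rat qmult_def)
  then show ?thesis using qpow_frobenius(1)[of 1 "-1"] unfolding q_def by simp
qed

lemma neg_four_power_ratcong_3:
  assumes "4 dvd p - 3" shows "ratcong_mod p (-2 * (-4) ^ ((p - 3) div 4)) 1"
proof -
  define q where "q = (p - 3) div 4"
  have p: "p = 4 * q + 3" using assms p_gt_2 unfolding q_def by auto
  have "qpow (-1) (1, 1) 4 = (-4, 0)" "qpow (-1) (1, 1) 3 = (-2, 2)"
    by (simp_all add: numeral_eq_Suc qmult_def)
  then have "qpow (-1) (1, 1) p = qmult (-1) (qpow (-1) (-4, 0) q) (-2, 2)"
    unfolding p by (simp add: qpow_mult qpow_add)
  then have "fst (qpow (-1) (1, 1) p) = -2 * (-4) ^ q" by (simp add: qpow_rat qmult_def)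
  then show ?thesis using qpow_frobenius(1)[of 1 "-1"] unfolding q_def by simp
qed

section \<open>The two sums\<close>

context
  fixes m :: rat
  assumes unit_m: "Zp_unit m" and unit_m_minus_1: "Zp_unit (m - 1)" and unit_m_plus_1: "Zp_unit (m + 1)"
begin

lemma m_nonzero: "m \<noteq> 0" "m - 1 \<noteq> 0" "m + 1 \<noteq> 0"
  using unit_m unit_m_minus_1 unit_m_plus_1 unfolding Zp_unit_def by auto

lemma unit_1_minus_m: "Zp_unit (1 - m)" and unit_1_plus_m: "Zp_unit (1 + m)"
  using Zp_unit_uminus[of "m - 1"] unit_m_minus_1 unit_m_plus_1 by (simp_all add: add.commute)

lemmas units = unit_m unit_m_minus_1 unit_m_plus_1 unit_1_minus_m unit_1_plus_m
  in_Zp_if_Zp_unit[OF unit_m] in_Zp_if_Zp_unit[OF unit_m_minus_1] in_Zp_if_Zp_unit[OF unit_m_plus_1]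

lemma qpow_two_div_m_minus_1:
  assumes "qpow (- m) (1, -1) (p - 1) = (A, B)"
  shows "qpow (- m) (1, 2 / (m - 1)) ((p - 1) div 2)
       = ((1 / (1 - m)) ^ ((p - 1) div 2) * A, (1 / (1 - m)) ^ ((p - 1) div 2) * B)"
proof -
  have "2 * ((p - 1) div 2) = p - 1" using odd by simp
  moreover have "- 2 / (1 + - m) = 2 / (m - 1)" using m_nonzero by (simp add: field_simps)
  ultimately show ?thesis
    using qpow_one_minus_sqrt_square[of "- m" "(p - 1) div 2"] assms m_nonzero by simp
qed

text \<open>Each sum and its claimed value are compared after multiplication by a unit that clears
  all denominators; both products then reduce to the same explicit expression.\<close>

lemma first_sum_times_scale:
  "ratcong_mod p ((\<Sum>k = 0..p div 4. of_nat ((4*k) choose (2*k)) * (- m / (4 * (m - 1)^2))^k)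
                   * ((m + 1) * (1 - m) ^ ((p - 1) div 2)))
                 (1 + m * (- m) ^ ((p - 1) div 2))"
  (is "ratcong_mod p (?S * ?K) _")
proof -
  define n where "n = (p - 1) div 2"
  obtain A B where AB: "qpow (- m) (1, -1) (p - 1) = (A, B)" by (cases "qpow (- m) (1, -1) (p - 1)")
  have "in_Zp p A" using in_Zp_qpow(1)[of 1 "-1" "- m" "p - 1"] AB units by simp
  have "Zp_unit (4 * (m - 1)^2)" using Zp_unit_power[OF Zp_unit_2, of 2] units by simp
  then have "in_Zp p (- m / (4 * (m - 1)^2))" using units by (intro in_Zp_divide) simp_all
  moreover have "(2 / (m - 1))\<^sup>2 * - m = 16 * (- m / (4 * (m - 1)^2))"
    using m_nonzero by (simp add: power_divide)
  ultimately have "ratcong_mod p ?S ((1 / (1 - m)) ^ n * A)"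
    using sum_central_binomial_ratcong_qpow qpow_two_div_m_minus_1[OF AB] unfolding n_def by fastforce
  then have "ratcong_mod p (?S * ?K) ((1 / (1 - m)) ^ n * A * ?K)"
    using units \<open>in_Zp p A\<close> unfolding n_def by (intro ratcong_mod_mult) simp_all
  also have "(1 / (1 - m)) ^ n * A * ?K = A * (1 - - m)"
    using m_nonzero unfolding n_def by (simp add: field_simps)
  also have "ratcong_mod p \<dots> (1 + m * (- m) ^ n)"
    using qpow_one_minus_sqrt_pred(1)[OF _ AB] units unfolding n_def by simp
  finally show ?thesis unfolding n_def .
qed

lemma first_value_times_scale:
  "ratcong_mod p (1 / (m + 1) * of_int (rLegendre (m - 1) p)
                     * (m * of_int (rLegendre m p) + of_int (Legendre (-1) (int p)))
                   * ((m + 1) * (1 - m) ^ ((p - 1) div 2)))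
                 (1 + m * (- m) ^ ((p - 1) div 2))"
  (is "ratcong_mod p (?R * ?K) _")
proof -
  define n where "n = (p - 1) div 2"
  have "?R * ?K = of_int (rLegendre (m - 1) p) * (m * of_int (rLegendre m p) + of_int (rLegendre (-1) p))
                  * (1 - m) ^ n"
    using m_nonzero unfolding n_def rLegendre_def by simp
  also have "ratcong_mod p \<dots> ((m - 1) ^ n * (m * m ^ n + (-1) ^ n) * (1 - m) ^ n)"
    using ratcong_mod_rLegendre units unfolding n_def
    by (intro ratcong_mod_mult ratcong_mod_add ratcong_mod_mult_left) simp_all
  also have "\<dots> = ((m - 1) ^ n * (m - 1) ^ n) * (1 + m * (- m) ^ n)"
  proof -
    define E :: rat where "E = (-1) ^ n"
    have sign: "(1 - m) ^ n = E * (m - 1) ^ n" "(- m) ^ n = E * m ^ n"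
      unfolding E_def by (simp_all flip: power_mult_distrib)
    have "E * E = 1" unfolding E_def by (simp flip: power_mult_distrib)
    moreover have "X * (m * M + E) * (E * X) = X * X * (m * (E * M) + E * E)" for X M :: rat
      by (simp add: algebra_simps)
    ultimately have "X * (m * M + E) * (E * X) = X * X * (1 + m * (E * M))" for X M :: rat
      by (simp add: add.commute)
    then show ?thesis unfolding E_def[symmetric] sign .
  qed
  also have "ratcong_mod p \<dots> (1 * (1 + m * (- m) ^ n))"
    using ratcong_mod_fermat_halves[OF unit_m_minus_1] units unfolding n_def
    by (intro ratcong_mod_mult) simp_all
  finally show ?thesis unfolding n_def by simp
qed

lemma first_sum_ratcong:
  "ratcong_mod p (\<Sum>k = 0..p div 4. of_nat ((4*k) choose (2*k)) * (- m / (4 * (m - 1)^2))^k)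
            (1 / (m + 1) * of_int (rLegendre (m - 1) p)
               * (m * of_int (rLegendre m p) + of_int (Legendre (-1) (int p))))"
  by (rule ratcong_mod_cancel_common[OF first_sum_times_scale first_value_times_scale])
    (use units in simp_all)

lemma second_sum_ratcong_qpow:
  assumes "qpow (- m) (1, -1) (p - 1) = (A, B)"
  defines "n \<equiv> (p - 1) div 2" and "u \<equiv> (m - 1) / (2 * m)"
  shows "ratcong_mod p (\<Sum>k = 0..p div 4. of_nat ((4*k) choose (2*k)) * (- ((m - 1)^2) / (64 * m))^k)
           (fst (qpow (- m) (0, u) n) * ((1 / (1 - m)) ^ n * A)
              + m * snd (qpow (- m) (0, u) n) * ((1 / (1 - m)) ^ n * B))"
proof -
  have "Zp_unit (64 * m)" using Zp_unit_power[OF Zp_unit_2, of 6] units by simp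
  then have "in_Zp p (- ((m - 1)^2) / (64 * m))" using units by (intro in_Zp_divide) simp_all
  moreover have "u\<^sup>2 * - m = 16 * (- ((m - 1)^2) / (64 * m))"
    using m_nonzero unfolding u_def by (simp add: power_divide field_simps power2_eq_square)
  ultimately have "ratcong_mod p (\<Sum>k = 0..p div 4. of_nat ((4*k) choose (2*k)) * (- ((m - 1)^2) / (64 * m))^k)
                    (fst (qpow (- m) (1, u) n))"
    using sum_central_binomial_ratcong_qpow unfolding n_def by blast
  moreover have "- m * u * - (2 / (m - 1)) = 1" using m_nonzero unfolding u_def by simp
  then have "qpow (- m) (1, u) n = qmult (- m) (qpow (- m) (0, u) n) (qpow (- m) (1, - (2 / (m - 1))) n)"
    by (rule qpow_one_split)
  ultimately show ?thesis
    using qpow_two_div_m_minus_1[OF assms(1)] unfolding qpow_conj n_def by (simp add: qmult_def)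
qed

lemma second_sum_normalizers:
  "m * ((m - 1) / (2 * m)) * (1 / (1 - m)) * (-2) = 1"
  "((m - 1) / (2 * m))\<^sup>2 * (- m) * (1 / (1 - m))\<^sup>2 * m * (-4) = 1"
proof -
  have uc: "(m - 1) / (2 * m) * (1 / (1 - m)) = - 1 / (2 * m)"
    using m_nonzero by (simp add: field_simps)
  have k1: "m * u * c * (-2) = (u * c) * (-2 * m)"
    and k2: "u\<^sup>2 * (- m) * c\<^sup>2 * m * (-4) = (u * c)\<^sup>2 * (4 * m * m)" for u c :: rat
    by (simp_all add: power2_eq_square algebra_simps)
  show "m * ((m - 1) / (2 * m)) * (1 / (1 - m)) * (-2) = 1"
    unfolding k1 uc using m_nonzero by simp
  show "((m - 1) / (2 * m))\<^sup>2 * (- m) * (1 / (1 - m))\<^sup>2 * m * (-4) = 1"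
    unfolding k2 uc using m_nonzero by (simp add: power2_eq_square)
qed

lemma second_sum_times_scale_1_mod_4:
  assumes "4 dvd p - 1"
  shows "ratcong_mod p ((\<Sum>k = 0..p div 4. of_nat ((4*k) choose (2*k)) * (- ((m - 1)^2) / (64 * m))^k)
                          * ((m + 1) * m ^ ((p - 1) div 4) * (-4) ^ ((p - 1) div 4)))
                        (1 + m * m ^ ((p - 1) div 2))"
  (is "ratcong_mod p (?S * ?K) _")
proof -
  define q where "q = (p - 1) div 4"
  define n where "n = (p - 1) div 2"
  define u where "u = (m - 1) / (2 * m)"
  have n: "n = 2 * q" using assms unfolding n_def q_def by auto
  obtain A B where AB: "qpow (- m) (1, -1) (p - 1) = (A, B)" by (cases "qpow (- m) (1, -1) (p - 1)")
  have "in_Zp p A" using in_Zp_qpow(1)[of 1 "-1" "- m" "p - 1"] AB units by simp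
  have "ratcong_mod p ?S (fst (qpow (- m) (0, u) n) * ((1 / (1 - m)) ^ n * A)
                         + m * snd (qpow (- m) (0, u) n) * ((1 / (1 - m)) ^ n * B))"
    using second_sum_ratcong_qpow[OF AB] unfolding n_def u_def .
  then have "ratcong_mod p ?S (u ^ n * (- m) ^ q * ((1 / (1 - m)) ^ n * A))"
    unfolding qpow_pure n by simp
  then have "ratcong_mod p (?S * ?K) (u ^ n * (- m) ^ q * ((1 / (1 - m)) ^ n * A) * ?K)"
    using units \<open>in_Zp p A\<close> unfolding u_def by (intro ratcong_mod_mult) simp_all
  also have "u ^ n * (- m) ^ q * ((1 / (1 - m)) ^ n * A) * ?K
           = A * (m + 1) * (u\<^sup>2 * (- m) * (1 / (1 - m))\<^sup>2 * m * (-4)) ^ q"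
    unfolding q_def[symmetric] n power_mult power_mult_distrib by (simp only: mult_ac)
  also have "u\<^sup>2 * (- m) * (1 / (1 - m))\<^sup>2 * m * (-4) = 1"
    unfolding u_def by (rule second_sum_normalizers(2))
  also have "ratcong_mod p (A * (m + 1) * 1 ^ q) (1 + m * m ^ n)"
    using qpow_one_minus_sqrt_pred(1)[OF _ AB] units unfolding n_def[symmetric] n
    by (simp add: add.commute)
  finally show ?thesis unfolding n_def .
qed

lemma second_value_times_scale_1_mod_4:
  assumes "4 dvd p - 1"
  shows "ratcong_mod p (1 / (m + 1) * (m + of_int (rLegendre m p)) * m ^ ((p - 1) div 4)
                          * ((m + 1) * m ^ ((p - 1) div 4) * (-4) ^ ((p - 1) div 4)))
                        (1 + m * m ^ ((p - 1) div 2))"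
  (is "ratcong_mod p (?R * ?K) _")
proof -
  define q where "q = (p - 1) div 4"
  define n where "n = (p - 1) div 2"
  have n: "n = 2 * q" using assms unfolding n_def q_def by auto
  have "?R * ?K = (m + of_int (rLegendre m p)) * (m ^ q * m ^ q) * (-4) ^ q"
    using m_nonzero unfolding q_def by simp
  also have "ratcong_mod p \<dots> ((m + m ^ n) * m ^ n * 1)"
    using ratcong_mod_rLegendre[OF unit_m] neg_four_power_ratcong_1[OF assms] units
    unfolding n_def[symmetric] q_def[symmetric] n
    by (intro ratcong_mod_mult ratcong_mod_add) (simp_all flip: power_add mult_2)
  also have "(m + m ^ n) * m ^ n * 1 = m * m ^ n + m ^ n * m ^ n"
    by (simp add: algebra_simps)
  also have "ratcong_mod p \<dots> (m * m ^ n + 1)"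
    using ratcong_mod_fermat_halves[OF unit_m] unfolding n_def[symmetric]
    by (intro ratcong_mod_add) simp_all
  finally show ?thesis unfolding n_def by (simp add: add.commute)
qed

lemma second_sum_ratcong_1_mod_4:
  assumes "4 dvd p - 1"
  shows "ratcong_mod p (\<Sum>k = 0..p div 4. of_nat ((4*k) choose (2*k)) * (- ((m - 1)^2) / (64 * m))^k)
           (1 / (m + 1) * (m + of_int (rLegendre m p)) * m ^ ((p - 1) div 4))"
  by (rule ratcong_mod_cancel_common[OF second_sum_times_scale_1_mod_4[OF assms]
        second_value_times_scale_1_mod_4[OF assms]])
    (use units in simp_all)

lemma second_sum_times_scale_3_mod_4:
  assumes "4 dvd p - 3"
  shows "ratcong_mod p ((\<Sum>k = 0..p div 4. of_nat ((4*k) choose (2*k)) * (- ((m - 1)^2) / (64 * m))^k)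
                          * ((m + 1) * m ^ ((p - 3) div 4) * (-2 * (-4) ^ ((p - 3) div 4))))
                        (1 + m ^ ((p - 1) div 2))"
  (is "ratcong_mod p (?S * ?K) _")
proof -
  define q where "q = (p - 3) div 4"
  define n where "n = (p - 1) div 2"
  define u where "u = (m - 1) / (2 * m)"
  have n: "n = Suc (2 * q)" using assms p_gt_2 unfolding n_def q_def by auto
  obtain A B where AB: "qpow (- m) (1, -1) (p - 1) = (A, B)" by (cases "qpow (- m) (1, -1) (p - 1)")
  have "in_Zp p B" using in_Zp_qpow(2)[of 1 "-1" "- m" "p - 1"] AB units by simp
  have "ratcong_mod p ?S (fst (qpow (- m) (0, u) n) * ((1 / (1 - m)) ^ n * A)
                         + m * snd (qpow (- m) (0, u) n) * ((1 / (1 - m)) ^ n * B))"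
    using second_sum_ratcong_qpow[OF AB] unfolding n_def u_def .
  then have "ratcong_mod p ?S (m * (u ^ n * (- m) ^ q) * ((1 / (1 - m)) ^ n * B))"
    unfolding qpow_pure n by simp
  then have "ratcong_mod p (?S * ?K) (m * (u ^ n * (- m) ^ q) * ((1 / (1 - m)) ^ n * B) * ?K)"
    using units \<open>in_Zp p B\<close> unfolding u_def by (intro ratcong_mod_mult) simp_all
  also have "m * (u ^ n * (- m) ^ q) * ((1 / (1 - m)) ^ n * B) * ?K
           = B * (m + 1) * (m * u * (1 / (1 - m)) * (-2))
               * (u\<^sup>2 * (- m) * (1 / (1 - m))\<^sup>2 * m * (-4)) ^ q"
    unfolding q_def[symmetric] n power_Suc power_mult power_mult_distrib by (simp only: mult_ac)
  also have "m * u * (1 / (1 - m)) * (-2) = 1"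
    unfolding u_def by (rule second_sum_normalizers(1))
  also have "u\<^sup>2 * (- m) * (1 / (1 - m))\<^sup>2 * m * (-4) = 1"
    unfolding u_def by (rule second_sum_normalizers(2))
  also have "ratcong_mod p (B * (m + 1) * 1 * 1 ^ q) (1 + m ^ n)"
    using qpow_one_minus_sqrt_pred(2)[OF _ AB] units unfolding n_def[symmetric] n
    by (simp add: add.commute)
  finally show ?thesis unfolding n_def .
qed

lemma second_value_times_scale_3_mod_4:
  assumes "4 dvd p - 3"
  shows "ratcong_mod p (1 / (m + 1) * (of_int (rLegendre m p) + 1) * m ^ ((p + 1) div 4)
                          * ((m + 1) * m ^ ((p - 3) div 4) * (-2 * (-4) ^ ((p - 3) div 4))))
                        (1 + m ^ ((p - 1) div 2))"
  (is "ratcong_mod p (?R * ?K) _")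
proof -
  define q where "q = (p - 3) div 4"
  define n where "n = (p - 1) div 2"
  have n: "n = Suc (2 * q)" and q: "(p + 1) div 4 = Suc q"
    using assms p_gt_2 unfolding n_def q_def by auto
  have "m ^ ((p + 1) div 4) * m ^ q = m ^ n" unfolding q n by (simp add: mult_2 flip: power_add)
  with m_nonzero have "?R * ?K = (of_int (rLegendre m p) + 1) * m ^ n * (-2 * (-4) ^ q)"
    unfolding q_def[symmetric] by (simp add: mult_ac)
  also have "ratcong_mod p \<dots> ((m ^ n + 1) * m ^ n * 1)"
    using ratcong_mod_rLegendre[OF unit_m] neg_four_power_ratcong_3[OF assms] units
    unfolding n_def[symmetric] q_def[symmetric]
    by (intro ratcong_mod_mult ratcong_mod_add) simp_all
  also have "(m ^ n + 1) * m ^ n * 1 = m ^ n * m ^ n + m ^ n"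
    by (simp add: algebra_simps)
  also have "ratcong_mod p \<dots> (1 + m ^ n)"
    using ratcong_mod_fermat_halves[OF unit_m] unfolding n_def[symmetric]
    by (intro ratcong_mod_add) simp_all
  finally show ?thesis unfolding n_def .
qed

lemma second_sum_ratcong_3_mod_4:
  assumes "4 dvd p - 3"
  shows "ratcong_mod p (\<Sum>k = 0..p div 4. of_nat ((4*k) choose (2*k)) * (- ((m - 1)^2) / (64 * m))^k)
           (1 / (m + 1) * (of_int (rLegendre m p) + 1) * m ^ ((p + 1) div 4))"
  by (rule ratcong_mod_cancel_common[OF second_sum_times_scale_3_mod_4[OF assms]
        second_value_times_scale_3_mod_4[OF assms]])
    (use units in simp_all)

end

end

theorem corollary2p10:
  fixes p :: nat and m :: rat
  assumes "prime p" and "odd p"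
    and "in_Zp p m"
    and "\<not> ratcong_mod p m 0" and "\<not> ratcong_mod p m 1" and "\<not> ratcong_mod p m (-1)"
  shows "ratcong_mod p (\<Sum>k = 0..p div 4. of_nat ((4*k) choose (2*k)) * (- m / (4 * (m - 1)^2))^k)
            (1 / (m + 1) * of_int (rLegendre (m - 1) p)
               * (m * of_int (rLegendre m p) + of_int (Legendre (-1) (int p))))
         \<and> (4 dvd p - 1 \<longrightarrow>
           ratcong_mod p (\<Sum>k = 0..p div 4. of_nat ((4*k) choose (2*k)) * (- ((m - 1)^2) / (64 * m))^k)
             (1 / (m + 1) * (m + of_int (rLegendre m p)) * m ^ ((p - 1) div 4)))
         \<and> (4 dvd p - 3 \<longrightarrow>
           ratcong_mod p (\<Sum>k = 0..p div 4. of_nat ((4*k) choose (2*k)) * (- ((m - 1)^2) / (64 * m))^k)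
             (1 / (m + 1) * (of_int (rLegendre m p) + 1) * m ^ ((p + 1) div 4)))"
proof -
  interpret odd_prime_modulus p
    using assms(1,2) by unfold_locales
  have cong_iff: "ratcong_mod p m c \<longleftrightarrow> ratcong_mod p (m - c) 0" for c
    unfolding ratcong_mod_def by simp
  have "Zp_unit m" "Zp_unit (m - 1)" "Zp_unit (m + 1)"
    using assms(3-6) cong_iff[of 1] cong_iff[of "-1"] unfolding Zp_unit_def by simp_all
  then show ?thesis
    using first_sum_ratcong second_sum_ratcong_1_mod_4 second_sum_ratcong_3_mod_4 by blast
qed

end
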